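(* Let $n\ge1$, $\theta\in(0,2]$, $1\le r\le q<\infty$ and $\gamma\in\mathbb R$, with $\gamma\ge0$ if $r=q$. For $t>0$ let $h_t(x):=t^{-n/\theta}(1+t^{-1/\theta}|x|)^{-n-\theta}$, $x\in\mathbb R^n$. Then there exists $C>0$ such that $$\int_0^\infty\tau^{q(1-\frac1r)}\Big[\log\Big(e+\frac1\tau\Big)\Big]^\gamma(h_t^*(\tau))^q\,d\tau\le Ct^{-\frac{nq}\theta(\frac1r-\frac1q)}\Big[\log\Big(e+\frac1t\Big)\Big]^\gamma$$ for all $t>0$.
   Context: For a measurable $f$ on $\mathbb R^n$, its non-increasing rearrangement is $f^*(s):=\inf\{\lambda>0:|\{x:|f(x)|>\lambda\}|\le s\}$ for $s\ge0$. *)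

theory Defs
  imports "HOL-Analysis.Analysis"
begin

definition rearrangement :: "('a::euclidean_space \<Rightarrow> real) \<Rightarrow> real \<Rightarrow> real" where
  "rearrangement f s =
     Inf {l. (l::real) > 0 \<and> emeasure lborel {x. \<bar>f x\<bar> > l} \<le> ennreal s}"

definition hkernel :: "real \<Rightarrow> real \<Rightarrow> 'a::euclidean_space \<Rightarrow> real" where
  "hkernel \<theta> t x = t powr (- real DIM('a) / \<theta>)
       * (1 + t powr (-1 / \<theta>) * norm x) powr (- real DIM('a) - \<theta>)"

end

theory Submission
  imports Defs
begin

(*
  Put T = t powr (n / \<theta>) and s = \<tau> / T.  The sup bound of h_t and the fact that its
  superlevel sets lie in balls give h_t*(\<tau>) \<le> V T^(-1) min 1 (s^(-(n+\<theta>)/n)).  Since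
  log(e + xy) \<le> 2 log(e + x) log(e + y) and log(e + x^k) \<le> (1 + max k 1) log(e + x), the
  weight log(e + 1/\<tau>)^\<gamma> is at most C log(e + 1/t)^\<gamma> max(s, 1/s)^\<beta>, for any \<beta> > 0.
  So the integrand is bounded by a constant times T^(q(1-1/r)-q) log(e + 1/t)^\<gamma> times a
  profile in s behaving like s^(q(1-1/r)-\<beta>) near 0 and like s^(-q/r-q\<theta>/n+\<beta>) near
  infinity; for small \<beta> it is integrable, and the substitution \<tau> = T s contributes one
  more factor T.
*)

section \<open>Rearrangement of the kernel\<close>

lemma rearrangement_le:
  assumes "0 < l" "emeasure lborel {x. \<bar>f x\<bar> > l} \<le> ennreal s"
  shows "rearrangement f s \<le> l"
  unfolding rearrangement_def
  by (rule cInf_lower) (use assms in \<open>auto intro: bdd_belowI[of _ 0]\<close>)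

lemma rearrangement_nonneg:
  assumes "0 < l" "emeasure lborel {x. \<bar>f x\<bar> > l} \<le> ennreal s"
  shows "0 \<le> rearrangement f s"
  unfolding rearrangement_def
  by (rule cInf_greatest) (use assms in auto)

lemma hkernel_pos:
  assumes "0 < t"
  shows "0 < hkernel \<theta> t x"
proof -
  have "0 < 1 + t powr (-1 / \<theta>) * norm x" by (simp add: add_pos_nonneg)
  then show ?thesis unfolding hkernel_def using assms by simp
qed

lemma hkernel_le_sup:
  assumes "0 < t" "0 < \<theta>"
  shows "hkernel \<theta> t (x::'a::euclidean_space) \<le> t powr (- real DIM('a) / \<theta>)"
proof -
  have "(1 + t powr (-1 / \<theta>) * norm x) powr (- real DIM('a) - \<theta>) \<le> 1"
    using assms powr_mono2'[of "- real DIM('a) - \<theta>" 1 "1 + t powr (-1 / \<theta>) * norm x"] by simp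
  then show ?thesis
    unfolding hkernel_def by (simp add: mult_left_le)
qed

lemma hkernel_le_tail:
  assumes "0 < t" "0 < \<theta>" "x \<noteq> 0"
  shows "hkernel \<theta> t (x::'a::euclidean_space) \<le> t * norm x powr (- (real DIM('a) + \<theta>))"
proof -
  define m where "m = real DIM('a) + \<theta>"
  have "hkernel \<theta> t x = t powr (- real DIM('a) / \<theta>) * (1 + t powr (-1 / \<theta>) * norm x) powr (-m)"
    by (simp add: hkernel_def m_def)
  also have "\<dots> \<le> t powr (- real DIM('a) / \<theta>) * (t powr (-1 / \<theta>) * norm x) powr (-m)"
    using assms by (intro mult_left_mono powr_mono2') (auto simp: m_def add_pos_pos)
  also have "\<dots> = (t powr (- real DIM('a) / \<theta>) * t powr (m / \<theta>)) * norm x powr (-m)"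
    using assms by (simp add: powr_mult powr_powr)
  also have "t powr (- real DIM('a) / \<theta>) * t powr (m / \<theta>) = t"
    using assms by (simp add: powr_add[symmetric] m_def add_divide_distrib)
  finally show ?thesis using assms by (simp add: m_def)
qed

lemma rearrangement_hkernel_le_sup:
  assumes "0 < t" "0 < \<theta>" "0 \<le> s"
  shows "rearrangement (hkernel \<theta> t :: 'a::euclidean_space \<Rightarrow> real) s \<le> t powr (- real DIM('a) / \<theta>)"
    and "0 \<le> rearrangement (hkernel \<theta> t :: 'a::euclidean_space \<Rightarrow> real) s"
proof -
  let ?l = "t powr (- real DIM('a) / \<theta>)"
  have "\<bar>hkernel \<theta> t x\<bar> \<le> ?l" for x :: 'a
    using hkernel_le_sup[OF assms(1,2), of x] hkernel_pos[OF assms(1), of \<theta> x] by simp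
  then have "{x. \<bar>(hkernel \<theta> t :: 'a \<Rightarrow> real) x\<bar> > ?l} = {}"
    by (auto simp: not_less[symmetric])
  then have level: "emeasure lborel {x. \<bar>(hkernel \<theta> t :: 'a \<Rightarrow> real) x\<bar> > ?l} \<le> ennreal s"
    by simp
  have "0 < ?l" using assms by simp
  then show "rearrangement (hkernel \<theta> t :: 'a \<Rightarrow> real) s \<le> ?l"
    and "0 \<le> rearrangement (hkernel \<theta> t :: 'a \<Rightarrow> real) s"
    using rearrangement_le rearrangement_nonneg level by blast+
qed

lemma hkernel_superlevel_subset_ball:
  assumes "0 < t" "0 < \<theta>" "0 < \<rho>"
  shows "{x. \<bar>hkernel \<theta> t x\<bar> > t * \<rho> powr (- (real DIM('a) + \<theta>))} \<subseteq> ball (0::'a::euclidean_space) \<rho>"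
proof (rule subsetI, rule ccontr)
  fix x :: 'a
  assume x: "x \<in> {x. \<bar>hkernel \<theta> t x\<bar> > t * \<rho> powr (- (real DIM('a) + \<theta>))}" and "x \<notin> ball 0 \<rho>"
  then have "\<rho> \<le> norm x" and x0: "x \<noteq> 0" using assms by auto
  then have "norm x powr (- (real DIM('a) + \<theta>)) \<le> \<rho> powr (- (real DIM('a) + \<theta>))"
    using assms by (intro powr_mono2') (auto intro: add_pos_pos)
  then have "hkernel \<theta> t x \<le> t * \<rho> powr (- (real DIM('a) + \<theta>))"
    using hkernel_le_tail[OF assms(1,2) x0] assms by (meson mult_left_mono order_trans less_imp_le)
  then show False using x hkernel_pos[OF assms(1), of \<theta> x] by auto
qed

lemma rearrangement_hkernel_le_tail:
  assumes "0 < t" "0 < \<theta>" "0 < s"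
  shows "rearrangement (hkernel \<theta> t :: 'a::euclidean_space \<Rightarrow> real) s
     \<le> t * ((unit_ball_vol (real DIM('a)) + 1) / s) powr ((real DIM('a) + \<theta>) / real DIM('a))"
proof -
  define n where "n = real DIM('a)"
  define V where "V = unit_ball_vol n + 1"
  define \<rho> where "\<rho> = (s / V) powr (1 / n)"
  define l where "l = t * \<rho> powr (- (n + \<theta>))"
  have n: "0 < n" by (simp add: n_def)
  have V: "1 < V" using n by (simp add: V_def)
  have \<rho>: "0 < \<rho>" using assms V by (simp add: \<rho>_def)
  have "{x. \<bar>(hkernel \<theta> t :: 'a \<Rightarrow> real) x\<bar> > l} \<subseteq> ball 0 \<rho>"
    using hkernel_superlevel_subset_ball[OF assms(1,2) \<rho>] by (simp add: l_def n_def)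
  then have "emeasure lborel {x. \<bar>(hkernel \<theta> t :: 'a \<Rightarrow> real) x\<bar> > l}
      \<le> emeasure lborel (ball (0::'a) \<rho>)"
    by (rule emeasure_mono) simp
  also have "\<dots> = ennreal ((V - 1) * \<rho> powr n)"
    using \<rho> by (simp add: emeasure_ball V_def n_def powr_realpow less_imp_le)
  also have "\<rho> powr n = s / V"
    using assms V n by (simp add: \<rho>_def powr_powr)
  also have "ennreal ((V - 1) * (s / V)) \<le> ennreal s"
    using V assms by (intro ennreal_leI) (simp add: field_simps)
  finally have "rearrangement (hkernel \<theta> t :: 'a \<Rightarrow> real) s \<le> l"
    by (rule rearrangement_le[rotated]) (use assms \<rho> in \<open>simp add: l_def\<close>)
  also have "l = t * (V / s) powr ((n + \<theta>) / n)"
  proof -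
    have "\<rho> powr (- (n + \<theta>)) = (s / V) powr (- ((n + \<theta>) / n))"
      using assms V n by (simp add: \<rho>_def powr_powr minus_divide_left)
    also have "\<dots> = (V / s) powr ((n + \<theta>) / n)"
      using assms V by (simp add: powr_minus_divide powr_divide)
    finally show ?thesis by (simp add: l_def)
  qed
  finally show ?thesis by (simp add: V_def n_def)
qed

lemma rearrangement_hkernel_le_rescaled:
  fixes \<theta> :: real
  assumes "0 < \<theta>"
  shows "\<exists>V\<ge>1. \<forall>t>0. \<forall>s>0.
           rearrangement (hkernel \<theta> t :: 'a::euclidean_space \<Rightarrow> real) (t powr (real DIM('a) / \<theta>) * s)
         \<le> V / t powr (real DIM('a) / \<theta>) * min 1 (s powr - ((real DIM('a) + \<theta>) / real DIM('a)))"
proof -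
  define n where "n = real DIM('a)"
  define p where "p = (n + \<theta>) / n"
  define V where "V = (unit_ball_vol n + 1) powr p"
  have n: "0 < n" by (simp add: n_def)
  have V: "1 \<le> V" using n assms by (simp add: V_def p_def ge_one_powr_ge_zero)
  have "rearrangement (hkernel \<theta> t :: 'a \<Rightarrow> real) (t powr (n / \<theta>) * s)
      \<le> V * t powr (- n / \<theta>) * min 1 (s powr - p)" if "0 < t" "0 < s" for t s
  proof -
    let ?h = "rearrangement (hkernel \<theta> t :: 'a \<Rightarrow> real) (t powr (n / \<theta>) * s)"
    have "?h \<le> t powr (- n / \<theta>)"
      using rearrangement_hkernel_le_sup(1)[OF that(1) assms, where 'a='a] that by (simp add: n_def)
    also have "\<dots> \<le> V * t powr (- n / \<theta>)" using V that by (simp add: mult_le_cancel_right1)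
    finally have sup: "?h \<le> V * t powr (- n / \<theta>)" .
    have "?h \<le> t * ((unit_ball_vol n + 1) / (t powr (n / \<theta>) * s)) powr p"
      using rearrangement_hkernel_le_tail[OF that(1) assms, where 'a='a] that by (simp add: n_def p_def)
    also have "\<dots> = V * (t * t powr (- (n / \<theta> * p))) * s powr - p"
      using that n by (simp add: V_def powr_divide powr_mult powr_powr powr_minus_divide field_simps)
    also have "t * t powr (- (n / \<theta> * p)) = t powr (- n / \<theta>)"
      using that n assms by (simp add: p_def powr_mult_base field_simps)
    finally have tail: "?h \<le> V * t powr (- n / \<theta>) * s powr - p" .
    have "0 \<le> V * t powr (- n / \<theta>)" using V by simp
    then show ?thesis
      using sup tail by (simp add: min_mult_distrib_left)
  qed
  moreover have "t powr (- n / \<theta>) = 1 / t powr (n / \<theta>)" for t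
    by (simp add: powr_minus_divide)
  ultimately show ?thesis using V by (auto simp: n_def p_def)
qed

section \<open>The logarithmic weight under rescaling\<close>

lemma ln_exp1_add_ge_1:
  fixes x :: real
  assumes "0 \<le> x"
  shows "1 \<le> ln (exp 1 + x)"
proof -
  have "ln (exp 1) \<le> ln (exp 1 + x)" using assms by (intro ln_mono) auto
  then show ?thesis by simp
qed

lemma ln_exp1_add_mult_le:
  fixes x y :: real
  assumes "0 \<le> x" "0 \<le> y"
  shows "ln (exp 1 + x * y) \<le> 2 * ln (exp 1 + x) * ln (exp 1 + y)"
proof -
  have "exp 1 + x * y \<le> (exp 1 + x) * (exp 1 + y)"
    using assms by (simp add: algebra_simps add_increasing)
  then have "ln (exp 1 + x * y) \<le> ln ((exp 1 + x) * (exp 1 + y))"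
    using assms by (intro ln_mono) (auto intro: add_pos_nonneg)
  also have "\<dots> = ln (exp 1 + x) + ln (exp 1 + y)"
    using assms by (intro ln_mult_pos) (auto intro: add_pos_nonneg)
  also have "\<dots> \<le> 2 * ln (exp 1 + x) * ln (exp 1 + y)"
    using ln_exp1_add_ge_1[OF assms(1)] ln_exp1_add_ge_1[OF assms(2)]
      mult_mono[of 0 "ln (exp 1 + x) - 1" 0 "ln (exp 1 + y) - 1"]
    by (simp add: algebra_simps)
  finally show ?thesis .
qed

lemma ln_exp1_add_powr_le:
  fixes k x :: real
  assumes "0 < k" "0 \<le> x"
  shows "ln (exp 1 + x powr k) \<le> (1 + max k 1) * ln (exp 1 + x)"
proof -
  define y where "y = exp 1 + x"
  have y: "exp 1 \<le> y" "1 \<le> y" using assms by (simp_all add: y_def add_increasing2)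
  have "x powr k \<le> y powr max k 1"
    using assms y by (intro order_trans[OF powr_mono2 powr_mono]) (auto simp: y_def)
  moreover have "exp 1 \<le> y powr max k 1"
    using y powr_mono[of 1 "max k 1" y] by simp
  ultimately have "ln (exp 1 + x powr k) \<le> ln (2 * y powr max k 1)"
    by (intro ln_mono) (auto intro: add_pos_nonneg)
  also have "\<dots> = ln 2 + max k 1 * ln y"
    using y by (simp add: ln_mult ln_powr)
  also have "\<dots> \<le> (1 + max k 1) * ln y"
    using ln_2_less_1 ln_exp1_add_ge_1[OF assms(2)] by (simp add: y_def algebra_simps)
  finally show ?thesis by (simp add: y_def)
qed

lemma ln_exp1_add_le_powr:
  fixes \<epsilon> x :: real
  assumes "0 < \<epsilon>" "0 \<le> x"
  shows "ln (exp 1 + x) \<le> (ln (exp 1 + 1) + 1 / \<epsilon>) * max 1 x powr \<epsilon>"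
proof -
  define w where "w = max 1 x"
  have w: "1 \<le> w" "1 \<le> w powr \<epsilon>" using assms by (simp_all add: w_def ge_one_powr_ge_zero)
  have "exp 1 + x \<le> (exp 1 + 1) * w"
    using w by (simp add: w_def algebra_simps max_def add_mono)
  then have "ln (exp 1 + x) \<le> ln ((exp 1 + 1) * w)"
    using assms by (intro ln_mono) (auto intro: add_pos_nonneg)
  also have "\<dots> = ln (exp 1 + 1) + ln w"
    using w by (intro ln_mult_pos) (auto intro: add_pos_pos)
  also have "ln w \<le> w powr \<epsilon> / \<epsilon>"
    using w assms by (intro ln_powr_bound) auto
  also have "ln (exp 1 + 1) + w powr \<epsilon> / \<epsilon> \<le> (ln (exp 1 + 1) + 1 / \<epsilon>) * w powr \<epsilon>"
    using w ln_exp1_add_ge_1[of 1] mult_left_mono[of 1 "w powr \<epsilon>" "ln (exp 1 + 1)"]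
    by (simp add: algebra_simps)
  finally show ?thesis by (simp add: w_def)
qed

lemma powr_le_of_ratio_bounds:
  fixes x y B \<gamma> :: real
  assumes "0 < x" "0 < y" "1 \<le> B" "x \<le> B * y" "y \<le> B * x"
  shows "x powr \<gamma> \<le> B powr \<bar>\<gamma>\<bar> * y powr \<gamma>"
proof (cases "0 \<le> \<gamma>")
  case True
  then have "x powr \<gamma> \<le> (B * y) powr \<gamma>" using assms by (intro powr_mono2) auto
  then show ?thesis using True assms by (simp add: powr_mult)
next
  case False
  have "y / B \<le> x" using assms by (simp add: field_simps)
  then have "x powr \<gamma> \<le> (y / B) powr \<gamma>" using False assms by (intro powr_mono2') auto
  also have "(y / B) powr \<gamma> = B powr (- \<gamma>) * y powr \<gamma>"
    by (subst powr_divide) (use assms in \<open>auto simp: powr_minus field_simps\<close>)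
  finally show ?thesis using False by simp
qed

lemma ln_exp1_add_rescale_bounds:
  fixes k t s :: real
  assumes "0 < k" "0 < t" "0 < s"
  defines "A \<equiv> 2 * (1 + max k 1) * (1 + max (1 / k) 1)"
    and "\<Lambda> \<equiv> ln (exp 1 + s) * ln (exp 1 + 1 / s)"
  shows "ln (exp 1 + 1 / (t powr k * s)) \<le> A * \<Lambda> * ln (exp 1 + 1 / t)"
    and "ln (exp 1 + 1 / t) \<le> A * \<Lambda> * ln (exp 1 + 1 / (t powr k * s))"
proof -
  define L where "L = ln (exp 1 + 1 / (t powr k * s))"
  define Lt where "Lt = ln (exp 1 + 1 / t)"
  define LT where "LT = ln (exp 1 + 1 / t powr k)"
  have ge1: "1 \<le> L" "1 \<le> Lt" "1 \<le> ln (exp 1 + s)" "1 \<le> ln (exp 1 + 1 / s)"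
    using assms by (simp_all add: L_def Lt_def ln_exp1_add_ge_1)
  have grow: "x \<le> x * ((1 + max a 1) * y)" if "0 \<le> x" "1 \<le> y" for x a y :: real
  proof -
    have "1 \<le> (1 + max a 1) * y" using that mult_mono[of 1 "1 + max a 1" 1 y] by simp
    then show ?thesis using that mult_left_mono[of 1 _ x] by simp
  qed
  have LT_le: "LT \<le> (1 + max k 1) * Lt"
    using ln_exp1_add_powr_le[of k "1 / t"] assms by (simp add: LT_def Lt_def powr_divide)
  have "L \<le> 2 * LT * ln (exp 1 + 1 / s)"
    using ln_exp1_add_mult_le[of "1 / t powr k" "1 / s"] assms by (simp add: L_def LT_def)
  also have "\<dots> \<le> 2 * ((1 + max k 1) * Lt) * ln (exp 1 + 1 / s)"
    using LT_le ge1 by (intro mult_right_mono mult_left_mono) auto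
  also have "\<dots> \<le> 2 * ((1 + max k 1) * Lt) * ln (exp 1 + 1 / s) * ((1 + max (1 / k) 1) * ln (exp 1 + s))"
    using ge1 by (intro grow) auto
  also have "\<dots> = A * \<Lambda> * Lt"
    by (simp add: A_def \<Lambda>_def mult_ac)
  finally show "L \<le> A * \<Lambda> * Lt" .
  have "Lt \<le> (1 + max (1 / k) 1) * LT"
    using ln_exp1_add_powr_le[of "1 / k" "1 / t powr k"] assms
    by (simp add: LT_def Lt_def powr_divide powr_powr)
  also have "\<dots> \<le> (1 + max (1 / k) 1) * (2 * L * ln (exp 1 + s))"
    using ln_exp1_add_mult_le[of "1 / (t powr k * s)" s] assms
    by (intro mult_left_mono) (simp_all add: L_def LT_def)
  also have "\<dots> \<le> (1 + max (1 / k) 1) * (2 * L * ln (exp 1 + s)) * ((1 + max k 1) * ln (exp 1 + 1 / s))"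
    using ge1 by (intro grow) auto
  also have "\<dots> = A * \<Lambda> * L"
    by (simp add: A_def \<Lambda>_def mult_ac)
  finally show "Lt \<le> A * \<Lambda> * L" .
qed

lemma ln_exp1_add_rescale_powr_le:
  fixes k t s \<gamma> :: real
  assumes "0 < k" "0 < t" "0 < s"
  shows "ln (exp 1 + 1 / (t powr k * s)) powr \<gamma>
    \<le> (2 * (1 + max k 1) * (1 + max (1 / k) 1) * (ln (exp 1 + s) * ln (exp 1 + 1 / s))) powr \<bar>\<gamma>\<bar>
      * ln (exp 1 + 1 / t) powr \<gamma>"
proof (rule powr_le_of_ratio_bounds)
  have "1 \<le> 2 * (1 + max k 1) * (1 + max (1 / k) 1)"
    using mult_mono[of 1 "2 * (1 + max k 1)" 1 "1 + max (1 / k) 1"] by simp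
  moreover have "1 \<le> ln (exp 1 + s) * ln (exp 1 + 1 / s)"
    using assms ln_exp1_add_ge_1[of s] ln_exp1_add_ge_1[of "1 / s"]
      mult_mono[of 1 "ln (exp 1 + s)" 1 "ln (exp 1 + 1 / s)"] by simp
  ultimately show "1 \<le> 2 * (1 + max k 1) * (1 + max (1 / k) 1) * (ln (exp 1 + s) * ln (exp 1 + 1 / s))"
    using mult_mono[of 1 "2 * (1 + max k 1) * (1 + max (1 / k) 1)" 1] by fastforce
  show "0 < ln (exp 1 + 1 / (t powr k * s))" "0 < ln (exp 1 + 1 / t)"
    using assms ln_exp1_add_ge_1[of "1 / t"] ln_exp1_add_ge_1[of "1 / (t powr k * s)"] by simp_all
qed (use ln_exp1_add_rescale_bounds[OF assms] in auto)

lemma ln_exp1_add_times_inverse_le: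
  fixes \<epsilon> s :: real
  assumes "0 < \<epsilon>" "0 < s"
  shows "ln (exp 1 + s) * ln (exp 1 + 1 / s) \<le> (ln (exp 1 + 1) + 1 / \<epsilon>)\<^sup>2 * max s (1 / s) powr \<epsilon>"
proof -
  define D where "D = ln (exp 1 + 1) + 1 / \<epsilon>"
  have "ln (exp 1 + s) * ln (exp 1 + 1 / s) \<le> (D * max 1 s powr \<epsilon>) * (D * max 1 (1 / s) powr \<epsilon>)"
    using assms ln_exp1_add_le_powr[of \<epsilon> s] ln_exp1_add_le_powr[of \<epsilon> "1 / s"]
      ln_exp1_add_ge_1[of s] ln_exp1_add_ge_1[of "1 / s"] by (intro mult_mono) (auto simp: D_def)
  also have "\<dots> = D\<^sup>2 * (max 1 s * max 1 (1 / s)) powr \<epsilon>"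
    by (simp add: powr_mult power2_eq_square)
  also have "max 1 s * max 1 (1 / s) = max s (1 / s)"
  proof (cases "s \<le> 1")
    case True
    then have "1 \<le> 1 / s" using assms by simp
    with True show ?thesis by (simp add: max_def)
  next
    case False
    then have "1 / s < s" using assms by (simp add: field_simps less_1_mult)
    with False show ?thesis by (simp add: max_def)
  qed
  finally show ?thesis by (simp add: D_def)
qed

lemma ln_exp1_add_inverse_rescale_powr_le:
  fixes k \<beta> \<gamma> :: real
  assumes "0 < k" "0 < \<beta>"
  shows "\<exists>c>0. \<forall>t>0. \<forall>s>0. ln (exp 1 + 1 / (t powr k * s)) powr \<gamma>
           \<le> c * ln (exp 1 + 1 / t) powr \<gamma> * max s (1 / s) powr \<beta>"
proof -
  define A where "A = 2 * (1 + max k 1) * (1 + max (1 / k) 1)"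
  define \<epsilon> where "\<epsilon> = \<beta> / (\<bar>\<gamma>\<bar> + 1)"
  define D where "D = (ln (exp 1 + 1) + 1 / \<epsilon>)\<^sup>2"
  have \<epsilon>: "0 < \<epsilon>" "\<epsilon> * \<bar>\<gamma>\<bar> \<le> \<beta>"
    using assms by (auto simp: \<epsilon>_def field_simps)
  have A: "0 < A" unfolding A_def by (intro mult_pos_pos) (auto simp: max_def)
  have "0 < ln (exp 1 + 1) + 1 / \<epsilon>"
    using \<epsilon> ln_exp1_add_ge_1[of 1] by (simp add: add_pos_pos)
  then have D: "0 < D" by (simp add: D_def)
  have "ln (exp 1 + 1 / (t powr k * s)) powr \<gamma> \<le> (A * D) powr \<bar>\<gamma>\<bar> * ln (exp 1 + 1 / t) powr \<gamma> * max s (1 / s) powr \<beta>"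
    if "0 < t" "0 < s" for t s
  proof -
    define w where "w = max s (1 / s)"
    have w: "1 \<le> w" using that by (cases "1 \<le> s") (auto simp: w_def le_max_iff_disj)
    have "ln (exp 1 + 1 / (t powr k * s)) powr \<gamma>
        \<le> (A * (ln (exp 1 + s) * ln (exp 1 + 1 / s))) powr \<bar>\<gamma>\<bar> * ln (exp 1 + 1 / t) powr \<gamma>"
      using ln_exp1_add_rescale_powr_le[OF assms(1) that] by (simp add: A_def)
    also have "(A * (ln (exp 1 + s) * ln (exp 1 + 1 / s))) powr \<bar>\<gamma>\<bar> \<le> (A * (D * w powr \<epsilon>)) powr \<bar>\<gamma>\<bar>"
      using that \<epsilon> A ln_exp1_add_times_inverse_le[of \<epsilon> s] ln_exp1_add_ge_1[of s] ln_exp1_add_ge_1[of "1 / s"]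
      by (intro powr_mono2 mult_left_mono) (auto simp: D_def w_def)
    also have "\<dots> = (A * D) powr \<bar>\<gamma>\<bar> * w powr (\<epsilon> * \<bar>\<gamma>\<bar>)"
      using A D w by (simp add: powr_mult powr_powr mult.assoc)
    also have "w powr (\<epsilon> * \<bar>\<gamma>\<bar>) \<le> w powr \<beta>"
      using w \<epsilon> by (intro powr_mono) auto
    finally show ?thesis by (simp add: w_def mult_ac mult_left_mono mult_right_mono)
  qed
  moreover have "0 < (A * D) powr \<bar>\<gamma>\<bar>" using A D by simp
  ultimately show ?thesis by blast
qed

section \<open>Integration against a two-sided power profile\<close>

definition power_profile :: "real \<Rightarrow> real \<Rightarrow> real \<Rightarrow> real" where
  "power_profile a b s = (if s \<le> 1 then s powr a else s powr b)"

lemma power_profile_nonneg: "0 \<le> power_profile a b s"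
  by (simp add: power_profile_def)

lemma power_profile_measurable [measurable]: "power_profile a b \<in> borel_measurable borel"
  unfolding power_profile_def by measurable

lemma nn_integral_power_profile_le:
  assumes "-1 < a" "b < -1"
  shows "(\<integral>\<^sup>+ s \<in> {0<..}. ennreal (power_profile a b s) \<partial>lborel) \<le> ennreal (1 / (a + 1) - 1 / (b + 1))"
proof -
  have "(\<integral>\<^sup>+ s \<in> {0<..}. ennreal (power_profile a b s) \<partial>lborel)
      \<le> (\<integral>\<^sup>+ s. ennreal (s powr a) * indicator {0..1} s + ennreal (s powr b) * indicator {1..} s \<partial>lborel)"
    by (intro nn_integral_mono) (auto simp: power_profile_def indicator_def)
  also have "\<dots> = (\<integral>\<^sup>+ s. ennreal (s powr a) * indicator {0..1} s \<partial>lborel)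
      + (\<integral>\<^sup>+ s. ennreal (s powr b) * indicator {1..} s \<partial>lborel)"
    by (rule nn_integral_add) auto
  also have "(\<integral>\<^sup>+ s. ennreal (s powr a) * indicator {0..1} s \<partial>lborel) = ennreal (1 / (a + 1))"
    using has_integral_powr_from_0[of a 1] assms
    by (intro nn_integral_has_integral_lebesgue') auto
  also have "(\<integral>\<^sup>+ s. ennreal (s powr b) * indicator {1..} s \<partial>lborel) = ennreal (- 1 / (b + 1))"
    using has_integral_powr_to_inf[of b 1] assms
    by (intro nn_integral_has_integral_lebesgue') auto
  also have "ennreal (1 / (a + 1)) + ennreal (- 1 / (b + 1)) = ennreal (1 / (a + 1) - 1 / (b + 1))"
    using assms by (subst ennreal_plus[symmetric]) (auto simp: divide_nonneg_neg)
  finally show ?thesis .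
qed

lemma nn_integral_pos_reals_rescale:
  fixes f :: "real \<Rightarrow> ennreal"
  assumes [measurable]: "f \<in> borel_measurable borel" and "0 < T"
  shows "(\<integral>\<^sup>+ \<tau> \<in> {0<..}. f (\<tau> / T) \<partial>lborel) = ennreal T * (\<integral>\<^sup>+ s \<in> {0<..}. f s \<partial>lborel)"
proof -
  have "(\<integral>\<^sup>+ \<tau> \<in> {0<..}. f (\<tau> / T) \<partial>lborel) = (\<integral>\<^sup>+ \<tau>. f (\<tau> / T) * indicator {0<..} (\<tau> / T) \<partial>lborel)"
    using assms by (intro nn_integral_cong) (auto simp: indicator_def zero_less_divide_iff)
  also have "\<dots> = ennreal \<bar>T\<bar> * (\<integral>\<^sup>+ s. f ((0 + T * s) / T) * indicator {0<..} ((0 + T * s) / T) \<partial>lborel)"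
    by (rule nn_integral_real_affine) (use assms in auto)
  finally show ?thesis using assms by simp
qed

lemma power_profile_eq:
  fixes s a \<beta> p q :: real
  assumes "0 < s" "0 \<le> p"
  shows "s powr a * max s (1 / s) powr \<beta> * min 1 (s powr - p) powr q = power_profile (a - \<beta>) (a + \<beta> - p * q) s"
proof (cases "s \<le> 1")
  case True
  then have "1 \<le> s powr - p" "s \<le> 1 / s"
    using assms powr_mono'[of "- p" 0 s] by (simp_all add: order_trans[OF True])
  then show ?thesis using True assms by (simp add: power_profile_def powr_divide powr_diff)
next
  case False
  then have "s powr - p \<le> 1" "1 / s \<le> s"
    using assms powr_mono[of "- p" 0 s] order_trans[of "1 / s" 1 s] by simp_all
  then show ?thesis using False assms by (simp add: power_profile_def powr_powr powr_add[symmetric])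
qed

lemma nn_integral_le_power_profile_bound:
  fixes f :: "real \<Rightarrow> real"
  assumes "0 < T" "0 \<le> M" "-1 < a" "b < -1"
    and "\<And>\<tau>. 0 < \<tau> \<Longrightarrow> f \<tau> \<le> M * power_profile a b (\<tau> / T)"
  shows "(\<integral>\<^sup>+ \<tau> \<in> {0<..}. ennreal (f \<tau>) \<partial>lborel) \<le> ennreal (M * T * (1 / (a + 1) - 1 / (b + 1)))"
proof -
  have "(\<integral>\<^sup>+ \<tau> \<in> {0<..}. ennreal (f \<tau>) \<partial>lborel)
      \<le> (\<integral>\<^sup>+ \<tau> \<in> {0<..}. ennreal M * ennreal (power_profile a b (\<tau> / T)) \<partial>lborel)"
    using assms by (intro nn_integral_mono)
      (auto split: split_indicator simp: ennreal_mult[symmetric] power_profile_nonneg intro!: ennreal_leI)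
  also have "\<dots> = ennreal M * (ennreal T * (\<integral>\<^sup>+ s \<in> {0<..}. ennreal (power_profile a b s) \<partial>lborel))"
    using nn_integral_pos_reals_rescale[of "\<lambda>s. ennreal (power_profile a b s)" T] assms(1)
    by (simp add: nn_integral_cmult mult.assoc)
  also have "\<dots> \<le> ennreal M * (ennreal T * ennreal (1 / (a + 1) - 1 / (b + 1)))"
    using nn_integral_power_profile_le[OF assms(3,4)] by (simp add: mult_left_mono)
  also have "\<dots> = ennreal (M * T * (1 / (a + 1) - 1 / (b + 1)))"
    using assms by (simp add: ennreal_mult' mult.assoc)
  finally show ?thesis .
qed

lemma rescaled_product_le_power_profile:
  fixes T s h g L c V p q \<alpha> \<beta> :: real
  assumes "0 < T" "0 < s" "0 \<le> p" "0 < q" "0 \<le> V" "0 \<le> g" "0 \<le> h"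
    and "h \<le> V / T * min 1 (s powr - p)"
    and "g \<le> c * L * max s (1 / s) powr \<beta>"
  shows "(T * s) powr \<alpha> * g * h powr q
    \<le> c * V powr q * T powr (\<alpha> - q) * L * power_profile (\<alpha> - \<beta>) (\<alpha> + \<beta> - p * q) s"
proof -
  have "h powr q \<le> (V / T * min 1 (s powr - p)) powr q"
    using assms by (intro powr_mono2) auto
  also have "\<dots> = V powr q * T powr - q * min 1 (s powr - p) powr q"
    using assms by (simp add: powr_mult powr_divide powr_minus_divide)
  finally have "h powr q \<le> V powr q * T powr - q * min 1 (s powr - p) powr q" .
  then have "(T * s) powr \<alpha> * g * h powr q
      \<le> (T powr \<alpha> * s powr \<alpha>) * (c * L * max s (1 / s) powr \<beta>) * (V powr q * T powr - q * min 1 (s powr - p) powr q)"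
    using assms by (intro mult_mono) (simp_all add: powr_mult)
  also have "\<dots> = c * V powr q * (T powr \<alpha> * T powr - q) * L
      * (s powr \<alpha> * max s (1 / s) powr \<beta> * min 1 (s powr - p) powr q)"
    by (simp add: mult_ac)
  also have "\<dots> = c * V powr q * T powr (\<alpha> - q) * L * power_profile (\<alpha> - \<beta>) (\<alpha> + \<beta> - p * q) s"
    using assms by (simp add: power_profile_eq powr_add[symmetric])
  finally show ?thesis .
qed

lemma weighted_rearrangement_hkernel_le_profile:
  fixes \<theta> r q \<gamma> :: real
  assumes "0 < \<theta>" "1 \<le> r" "r \<le> q"
  shows "\<exists>K>0. \<exists>a b. -1 < a \<and> b < -1 \<and> (\<forall>t>0. \<forall>\<tau>>0.
           \<tau> powr (q * (1 - 1 / r)) * ln (exp 1 + 1 / \<tau>) powr \<gamma>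
             * rearrangement (hkernel \<theta> t :: 'a::euclidean_space \<Rightarrow> real) \<tau> powr q
           \<le> K * (t powr (real DIM('a) / \<theta>)) powr (q * (1 - 1 / r) - q) * ln (exp 1 + 1 / t) powr \<gamma>
             * power_profile a b (\<tau> / t powr (real DIM('a) / \<theta>)))"
proof -
  define n where "n = real DIM('a)"
  define k where "k = n / \<theta>"
  define p where "p = (n + \<theta>) / n"
  define \<alpha> where "\<alpha> = q * (1 - 1 / r)"
  define \<mu> where "\<mu> = q * \<theta> / n"
  \<comment> \<open>Any 0 < \<beta> < min 1 \<mu> keeps both exponents of the profile on the integrable side of -1.\<close>
  define \<beta> where "\<beta> = min 1 \<mu> / 2"
  have n: "0 < n" and q: "0 < q" and k: "0 < k" and p: "0 \<le> p" and \<alpha>: "0 \<le> \<alpha>" and \<mu>: "0 < \<mu>"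
    using assms by (simp_all add: n_def k_def p_def \<alpha>_def \<mu>_def)
  then have \<beta>: "0 < \<beta>" "\<beta> < 1" "\<beta> < \<mu>"
    unfolding \<beta>_def by (auto simp: min_def)
  obtain V where V: "1 \<le> V" and rearr: "\<And>t s. 0 < t \<Longrightarrow> 0 < s \<Longrightarrow>
      rearrangement (hkernel \<theta> t :: 'a \<Rightarrow> real) (t powr k * s) \<le> V / t powr k * min 1 (s powr - p)"
    using rearrangement_hkernel_le_rescaled[OF assms(1), where 'a='a] unfolding n_def k_def p_def by blast
  obtain c where c: "0 < c" and log: "\<And>t s. 0 < t \<Longrightarrow> 0 < s \<Longrightarrow>
      ln (exp 1 + 1 / (t powr k * s)) powr \<gamma> \<le> c * ln (exp 1 + 1 / t) powr \<gamma> * max s (1 / s) powr \<beta>"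
    using ln_exp1_add_inverse_rescale_powr_le[OF k \<beta>(1), of \<gamma>] by blast
  have "\<alpha> - p * q = - (q / r) - \<mu>" and "1 \<le> q / r"
    using n assms by (simp_all add: \<alpha>_def p_def \<mu>_def field_simps)
  then have exponents: "-1 < \<alpha> - \<beta>" "\<alpha> + \<beta> - p * q < -1" using \<alpha> \<beta> by linarith+
  have "\<tau> powr \<alpha> * ln (exp 1 + 1 / \<tau>) powr \<gamma> * rearrangement (hkernel \<theta> t :: 'a \<Rightarrow> real) \<tau> powr q
      \<le> (c * V powr q) * (t powr k) powr (\<alpha> - q) * ln (exp 1 + 1 / t) powr \<gamma>
        * power_profile (\<alpha> - \<beta>) (\<alpha> + \<beta> - p * q) (\<tau> / t powr k)"
    if "0 < t" "0 < \<tau>" for t \<tau>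
  proof -
    have T: "0 < t powr k" and s: "0 < \<tau> / t powr k" and \<tau>: "\<tau> = t powr k * (\<tau> / t powr k)"
      using that by simp_all
    show ?thesis
      using rescaled_product_le_power_profile[OF T s p q _ _ _ rearr[OF that(1) s] log[OF that(1) s]] V that
        rearrangement_hkernel_le_sup(2)[OF that(1) assms(1), where 'a='a]
      by (simp flip: \<tau>)
  qed
  moreover have "0 < c * V powr q" using c V by simp
  ultimately show ?thesis
    using exponents unfolding \<alpha>_def[symmetric] n_def[symmetric] k_def[symmetric] by blast
qed

theorem lemma3p2:
  fixes \<theta> r q \<gamma> :: real
  assumes "0 < \<theta>" "\<theta> \<le> 2" "1 \<le> r" "r \<le> q" "r = q \<longrightarrow> \<gamma> \<ge> 0"
  shows "\<exists>C>0. \<forall>t>0.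
    (\<integral>\<^sup>+ \<tau> \<in> {0<..}. ennreal (\<tau> powr (q * (1 - 1 / r)) * (ln (exp 1 + 1 / \<tau>)) powr \<gamma>
        * (rearrangement (hkernel \<theta> t :: 'a::euclidean_space \<Rightarrow> real) \<tau>) powr q) \<partial>lborel)
    \<le> ennreal (C * t powr (- (real DIM('a) * q / \<theta>) * (1 / r - 1 / q))
        * (ln (exp 1 + 1 / t)) powr \<gamma>)"
proof -
  obtain K a b where K: "0 < K" and ab: "-1 < a" "b < -1" and pointwise: "\<And>t \<tau>. 0 < t \<Longrightarrow> 0 < \<tau> \<Longrightarrow>
      \<tau> powr (q * (1 - 1 / r)) * ln (exp 1 + 1 / \<tau>) powr \<gamma> * rearrangement (hkernel \<theta> t :: 'a \<Rightarrow> real) \<tau> powr q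
      \<le> K * (t powr (real DIM('a) / \<theta>)) powr (q * (1 - 1 / r) - q) * ln (exp 1 + 1 / t) powr \<gamma>
        * power_profile a b (\<tau> / t powr (real DIM('a) / \<theta>))"
    using weighted_rearrangement_hkernel_le_profile[OF assms(1,3,4), of \<gamma>, where 'a='a] by auto
  define I where "I = 1 / (a + 1) - 1 / (b + 1)"
  have "0 < 1 / (a + 1)" "1 / (b + 1) < 0" using ab by simp_all
  then have I: "0 < I" unfolding I_def by linarith
  have "(\<integral>\<^sup>+ \<tau> \<in> {0<..}. ennreal (\<tau> powr (q * (1 - 1 / r)) * (ln (exp 1 + 1 / \<tau>)) powr \<gamma>
        * (rearrangement (hkernel \<theta> t :: 'a \<Rightarrow> real) \<tau>) powr q) \<partial>lborel)
    \<le> ennreal (K * I * t powr (- (real DIM('a) * q / \<theta>) * (1 / r - 1 / q)) * (ln (exp 1 + 1 / t)) powr \<gamma>)"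
    (is "?lhs \<le> _") if t: "0 < t" for t
  proof -
    let ?T = "t powr (real DIM('a) / \<theta>)"
    have "?lhs \<le> ennreal (K * ?T powr (q * (1 - 1 / r) - q) * ln (exp 1 + 1 / t) powr \<gamma> * ?T * I)"
      unfolding I_def using K t by (intro nn_integral_le_power_profile_bound ab pointwise) simp_all
    also have "K * ?T powr (q * (1 - 1 / r) - q) * ln (exp 1 + 1 / t) powr \<gamma> * ?T * I
        = K * I * (?T powr (q * (1 - 1 / r) - q) * ?T) * ln (exp 1 + 1 / t) powr \<gamma>"
      by (simp add: mult_ac)
    also have "?T powr (q * (1 - 1 / r) - q) * ?T = t powr (real DIM('a) / \<theta> * (q * (1 - 1 / r) - q) + real DIM('a) / \<theta>)"
      using t by (simp add: powr_powr powr_add)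
    also have "real DIM('a) / \<theta> * (q * (1 - 1 / r) - q) + real DIM('a) / \<theta>
        = - (real DIM('a) * q / \<theta>) * (1 / r - 1 / q)"
      using assms by (simp add: field_simps)
    finally show ?thesis .
  qed
  then show ?thesis using K I by (intro exI[of _ "K * I"]) auto
qed

end
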